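(* Let $n\in\mathbb N$, let $J$ be an arbitrary $n$-field function and let $K_1,\dots,K_n$ be kernel functions satisfying (PM$_c$) for some $c>0$. Let $\mathbf y\in Y$. For each $j\in\{0,1,\dots,n\}$ let $t_{*j},t^*_j\in\operatorname{rint}I_j(\mathbf y)$ be arbitrary points with $t_{*j}\le t^*_j$. For each $j\in\{0,\dots,n\}$ and $r\in\{1,\dots,n\}$ let $$\mu_{jr}\in\bigl[D_-K_r(t^*_j-y_r),\,D_-K_r(t_{*j}-y_r)\bigr]$$ be arbitrary. Define the $n\times n$ matrix $A=[a_{jr}]_{j,r=1}^n$ by $a_{jr}:=\mu_{jr}-\mu_{(j-1)r}$. Then $$a_{rr}-\sum_{j=1,\,j\ne r}^n|a_{jr}|\ge c\qquad(r=1,\dots,n).$$ In particular, $A$ is invertible.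
   Context: A kernel function is a function $K:(-1,0)\cup(0,1)\to\mathbb R$ that is concave on $(-1,0)$ and concave on $(0,1)$ and satisfies $\lim_{t\downarrow0}K(t)=\lim_{t\uparrow0}K(t)$. It is extended to $[-1,1]$ by its one-sided limits. For $c\ge0$, a kernel function satisfies (PM$_c$) if $K'(t)-K'(t-1)\ge c$ for almost every $t\in(0,1)$. $D_-K$ denotes the left derivative. An $n$-field function is a function $J:[0,1]\to[-\infty,\infty)$ that is bounded above and whose set of finite values has total weight strictly greater than $n$. Here the points $0$ and $1$ each have weight $1/2$ and every point of $(0,1)$ has weight $1$. $S=\{\mathbf y\in\mathbb R^n:0<y_1<\dots<y_n<1\}$. Set $y_0:=0$ and $y_{n+1}:=1$. Let $I_j(\mathbf y)=[y_j,y_{j+1}]$ and $m_j(\mathbf y)=\sup_{t\in I_j(\mathbf y)}\bigl(J(t)+\sum_iK_i(t-y_i)\bigr)$. $Y=\{\mathbf y\in S:m_j(\mathbf y)\neq-\infty\ \forall j\}$. $\operatorname{rint}$ denotes the interior relative to $[0,1]$; thus $\operatorname{rint}I_0=[0,y_1)$, $\operatorname{rint}I_n=(y_n,1]$, and $\operatorname{rint}I_j=(y_j,y_{j+1})$ otherwise. *)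

theory Defs
  imports "HOL-Analysis.Analysis" "Jordan_Normal_Form.Matrix"
begin

text \<open>Kernel function: concave on (-1,0) and on (0,1), with equal one-sided limits at 0
  (limits taken in the extended reals, so the common value may be -infinity).\<close>
definition kernel :: "(real \<Rightarrow> real) \<Rightarrow> bool" where
  "kernel K \<longleftrightarrow> concave_on {-1<..<0} K \<and> concave_on {0<..<1} K \<and>
     (\<exists>L::ereal. ((\<lambda>t. ereal (K t)) \<longlongrightarrow> L) (at_left 0) \<and>
                 ((\<lambda>t. ereal (K t)) \<longlongrightarrow> L) (at_right 0))"

definition Kext :: "(real \<Rightarrow> real) \<Rightarrow> real \<Rightarrow> ereal" where
  "Kext K t = (if t \<in> {-1<..<0} \<union> {0<..<1} then ereal (K t)
     else if t = 0 then Lim (at_right 0) (\<lambda>s. ereal (K s))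
     else if t = -1 then Lim (at_right (-1)) (\<lambda>s. ereal (K s))
     else Lim (at_left 1) (\<lambda>s. ereal (K s)))"

definition PM :: "real \<Rightarrow> (real \<Rightarrow> real) \<Rightarrow> bool" where
  "PM c K \<longleftrightarrow> (AE t in lborel. t \<in> {0<..<1} \<longrightarrow>
      K differentiable (at t) \<and> K differentiable (at (t - 1)) \<and>
      deriv K t - deriv K (t - 1) \<ge> c)"

definition left_deriv :: "(real \<Rightarrow> real) \<Rightarrow> real \<Rightarrow> real" where
  "left_deriv K x = Lim (at_left 0) (\<lambda>h. (K (x + h) - K x) / h)"

definition weight :: "real set \<Rightarrow> ereal" where
  "weight F = (if infinite (F \<inter> {0<..<1}) then \<infinity>
     else ereal (real (card (F \<inter> {0<..<1})) + (if 0 \<in> F then 1/2 else 0)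
                 + (if 1 \<in> F then 1/2 else 0)))"

definition n_field :: "nat \<Rightarrow> (real \<Rightarrow> ereal) \<Rightarrow> bool" where
  "n_field n J \<longleftrightarrow> (\<exists>M::real. \<forall>t\<in>{0..1}. J t \<le> ereal M) \<and>
     weight {t\<in>{0..1}. J t \<noteq> -\<infinity>} > ereal (real n)"

definition yy :: "nat \<Rightarrow> (nat \<Rightarrow> real) \<Rightarrow> nat \<Rightarrow> real" where
  "yy n y j = (if j = 0 then 0 else if j = n + 1 then 1 else y j)"

definition inS :: "nat \<Rightarrow> (nat \<Rightarrow> real) \<Rightarrow> bool" where
  "inS n y \<longleftrightarrow> (\<forall>j\<in>{0..n}. yy n y j < yy n y (j + 1))"

definition m_val :: "nat \<Rightarrow> (real \<Rightarrow> ereal) \<Rightarrow> (nat \<Rightarrow> real \<Rightarrow> real) \<Rightarrow> (nat \<Rightarrow> real)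
    \<Rightarrow> nat \<Rightarrow> ereal" where
  "m_val n J K y j = (SUP t\<in>{yy n y j .. yy n y (j + 1)}.
      J t + (\<Sum>i\<in>{1..n}. Kext (K i) (t - y i)))"

definition inY :: "nat \<Rightarrow> (real \<Rightarrow> ereal) \<Rightarrow> (nat \<Rightarrow> real \<Rightarrow> real) \<Rightarrow> (nat \<Rightarrow> real) \<Rightarrow> bool" where
  "inY n J K y \<longleftrightarrow> inS n y \<and> (\<forall>j\<in>{0..n}. m_val n J K y j \<noteq> -\<infinity>)"

text \<open>Relative interior (w.r.t. [0,1]) of I_j(y).\<close>
definition rintI :: "nat \<Rightarrow> (nat \<Rightarrow> real) \<Rightarrow> nat \<Rightarrow> real set" where
  "rintI n y j = {t. (if j = 0 then 0 \<le> t else yy n y j < t) \<and>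
                     (if j = n then t \<le> 1 else t < yy n y (j + 1))}"

end

theory Submission
  imports Defs "Jordan_Normal_Form.Determinant"
begin

text \<open>Column r of A telescopes to mu(n,r) - mu(0,r). For j \<noteq> r the points
  tu(j-1) < y(j) < tl(j) lie on the same side of y(r), so t - y(r) stays in one interval of
  concavity of K(r), where the left derivative is antitone; hence a(j,r) \<le> 0.
  From I(0) to I(n) the argument t - y(r) crosses the singularity at 0 exactly once, and
  (PM_c), transported from derivatives at almost every point to left derivatives by
  monotonicity and left upper semicontinuity, gives mu(n,r) - mu(0,r) \<ge> c. Thus
  a(r,r) - (\<Sum>j\<noteq>r. |a(j,r)|) = (\<Sum>j. a(j,r)) \<ge> c, and a strictly column diagonally dominant
  matrix is invertible (Levy-Desplanques).\<close>

lemma concave_on_slopes: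
  fixes f :: "real \<Rightarrow> real"
  assumes f: "concave_on I f" and I: "u \<in> I" "v \<in> I" and t: "u < t" "t < v"
  shows "(f v - f u) / (v - u) \<le> (f t - f u) / (t - u)"
    and "(f v - f t) / (v - t) \<le> (f v - f u) / (v - u)"
proof -
  have "convex_on I (\<lambda>x. - f x)" using f by (simp add: convex_on_iff_concave)
  note s = convex_on_slope_le[OF this I t]
  have "(- f u - - f t) / (u - t) = - ((f t - f u) / (t - u))"
    and "(- f u - - f v) / (u - v) = - ((f v - f u) / (v - u))"
    and "(- f t - - f v) / (t - v) = - ((f v - f t) / (v - t))"
    using t by (simp_all add: field_simps)
  with s show "(f v - f u) / (v - u) \<le> (f t - f u) / (t - u)"
    and "(f v - f t) / (v - t) \<le> (f v - f u) / (v - u)" by simp_all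
qed

definition left_slope_inf :: "(real \<Rightarrow> real) \<Rightarrow> real \<Rightarrow> real \<Rightarrow> real" where
  "left_slope_inf f a x = (INF u\<in>{a<..<x}. (f x - f u) / (x - u))"

context
  fixes f :: "real \<Rightarrow> real" and a b :: real
  assumes concave: "concave_on {a<..<b} f"
begin

lemma left_slopes_bdd_below:
  assumes "a < x" "x < b"
  shows "bdd_below ((\<lambda>u. (f x - f u) / (x - u)) ` {a<..<x})"
proof -
  obtain w where w: "x < w" "w < b" using \<open>x < b\<close> dense by blast
  show ?thesis
  proof (rule bdd_belowI2)
    fix u assume u: "u \<in> {a<..<x}"
    have "(f w - f x) / (w - x) \<le> (f w - f u) / (w - u)"
      using concave_on_slopes(2)[OF concave, of u w x] u assms w by auto
    also have "\<dots> \<le> (f x - f u) / (x - u)"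
      using concave_on_slopes(1)[OF concave, of u w x] u assms w by auto
    finally show "(f w - f x) / (w - x) \<le> (f x - f u) / (x - u)" .
  qed
qed

lemma left_slope_inf_le:
  assumes "a < u" "u < x" "x < b"
  shows "left_slope_inf f a x \<le> (f x - f u) / (x - u)"
  unfolding left_slope_inf_def
  by (rule cInf_lower[OF _ left_slopes_bdd_below]) (use assms in auto)

lemma left_slope_inf_approx:
  assumes "a < x" "x < b" "e > 0"
  obtains u where "a < u" "u < x" "(f x - f u) / (x - u) < left_slope_inf f a x + e"
proof -
  have "(\<lambda>u. (f x - f u) / (x - u)) ` {a<..<x} \<noteq> {}" using assms by auto
  moreover have "(INF u\<in>{a<..<x}. (f x - f u) / (x - u)) < left_slope_inf f a x + e"
    using assms(3) by (simp add: left_slope_inf_def)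
  ultimately obtain z where "z \<in> (\<lambda>u. (f x - f u) / (x - u)) ` {a<..<x}"
    "z < left_slope_inf f a x + e"
    using cInf_less_iff[OF _ left_slopes_bdd_below[OF assms(1,2)]] by blast
  then show ?thesis using that by auto
qed

lemma left_deriv_eq_left_slope_inf:
  assumes x: "a < x" "x < b"
  shows "left_deriv f x = left_slope_inf f a x"
proof -
  have "((\<lambda>h. (f (x + h) - f x) / h) \<longlongrightarrow> left_slope_inf f a x) (at_left 0)"
  proof (rule tendstoI)
    fix e :: real assume "e > 0"
    then obtain u0 where u0: "a < u0" "u0 < x"
        "(f x - f u0) / (x - u0) < left_slope_inf f a x + e"
      using left_slope_inf_approx x by blast
    have "eventually (\<lambda>h. h \<in> {u0 - x<..<0}) (at_left (0::real))"
      by (rule eventually_at_left_real) (use u0 in auto)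
    then show "eventually (\<lambda>h. dist ((f (x + h) - f x) / h) (left_slope_inf f a x) < e)
        (at_left 0)"
    proof (rule eventually_mono)
      fix h assume h: "h \<in> {u0 - x<..<0}"
      define u where "u = x + h"
      have u: "u0 < u" "u < x" using h u_def by auto
      have "(f (x + h) - f x) / h = (f x - f u) / (x - u)"
        unfolding u_def using h by (simp add: field_simps)
      moreover have "left_slope_inf f a x \<le> (f x - f u) / (x - u)"
        using left_slope_inf_le u u0 x by auto
      moreover have "(f x - f u) / (x - u) \<le> (f x - f u0) / (x - u0)"
        using concave_on_slopes(2)[OF concave, of u0 x u] u u0 x by auto
      ultimately show "dist ((f (x + h) - f x) / h) (left_slope_inf f a x) < e"
        using u0(3) by (simp add: dist_real_def)
    qed
  qed
  then show ?thesis unfolding left_deriv_def by (rule tendsto_Lim[rotated]) simp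
qed

lemma left_deriv_le_slope:
  assumes "a < u" "u < x" "x < b"
  shows "left_deriv f x \<le> (f x - f u) / (x - u)"
  using left_deriv_eq_left_slope_inf left_slope_inf_le assms by simp

lemma slope_le_left_deriv:
  assumes u: "a < u" "u < v" "v < b"
  shows "(f v - f u) / (v - u) \<le> left_deriv f u"
proof -
  have "(f v - f u) / (v - u) \<le> left_slope_inf f a u"
    unfolding left_slope_inf_def
  proof (rule cINF_greatest)
    fix w assume w: "w \<in> {a<..<u}"
    have "(f v - f u) / (v - u) \<le> (f v - f w) / (v - w)"
      using concave_on_slopes(2)[OF concave, of w v u] w u by auto
    also have "\<dots> \<le> (f u - f w) / (u - w)"
      using concave_on_slopes(1)[OF concave, of w v u] w u by auto
    finally show "(f v - f u) / (v - u) \<le> (f u - f w) / (u - w)" .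
  qed (use u in auto)
  with left_deriv_eq_left_slope_inf u show ?thesis by simp
qed

lemma left_deriv_antimono:
  assumes "a < u" "u \<le> v" "v < b"
  shows "left_deriv f v \<le> left_deriv f u"
proof (cases "u = v")
  case False
  with assms have "left_deriv f v \<le> (f v - f u) / (v - u)"
    and "(f v - f u) / (v - u) \<le> left_deriv f u"
    by (auto intro: left_deriv_le_slope slope_le_left_deriv)
  then show ?thesis by linarith
qed simp

lemma eventually_left_deriv_le:
  assumes x: "a < x" "x < b" and e: "e > 0"
  shows "eventually (\<lambda>u. left_deriv f u \<le> left_deriv f x + e) (at_left x)"
proof -
  obtain w where w: "a < w" "w < x" "(f x - f w) / (x - w) < left_slope_inf f a x + e / 2"
    using left_slope_inf_approx[OF x, of "e/2"] e by auto
  have "continuous_on {a<..<b} (\<lambda>x. - f x)"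
    by (rule convex_on_continuous) (use concave in \<open>auto simp: convex_on_iff_concave\<close>)
  then have "isCont f x"
    using x continuous_on_minus[of _ "\<lambda>x. - f x"] continuous_on_eq_continuous_at[of "{a<..<b}" f]
    by auto
  then have "((\<lambda>u. (f u - f w) / (u - w)) \<longlongrightarrow> (f x - f w) / (x - w)) (at x)"
    by (intro tendsto_intros isCont_tendsto_compose[of x f] tendsto_ident_at) (use w in auto)
  then have "((\<lambda>u. (f u - f w) / (u - w)) \<longlongrightarrow> (f x - f w) / (x - w)) (at_left x)"
    by (rule tendsto_mono[rotated]) (simp add: at_le)
  then have "eventually (\<lambda>u. (f u - f w) / (u - w) < (f x - f w) / (x - w) + e/2) (at_left x)"
    by (rule order_tendstoD) (use e in auto)
  moreover have "eventually (\<lambda>u. u \<in> {w<..<x}) (at_left x)"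
    using w(2) by (rule eventually_at_left_real)
  ultimately show ?thesis
  proof (rule eventually_elim2)
    fix u assume slope: "(f u - f w) / (u - w) < (f x - f w) / (x - w) + e/2"
      and u: "u \<in> {w<..<x}"
    have "left_deriv f u \<le> (f u - f w) / (u - w)"
      using left_deriv_le_slope u w x by auto
    also have "\<dots> < left_slope_inf f a x + e" using slope w(3) by linarith
    finally show "left_deriv f u \<le> left_deriv f x + e"
      using left_deriv_eq_left_slope_inf[OF x] by simp
  qed
qed

end

lemma deriv_eq_left_deriv:
  fixes f :: "real \<Rightarrow> real"
  assumes "f differentiable (at x)"
  shows "deriv f x = left_deriv f x"
proof -
  have "((\<lambda>h. (f (x + h) - f x) / h) \<longlongrightarrow> deriv f x) (at 0)"
    using assms by (simp add: DERIV_deriv_iff_real_differentiable[symmetric] DERIV_def)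
  then have "((\<lambda>h. (f (x + h) - f x) / h) \<longlongrightarrow> deriv f x) (at_left 0)"
    by (rule tendsto_mono[rotated]) (simp add: at_le)
  then show ?thesis unfolding left_deriv_def by (rule tendsto_Lim[symmetric, rotated]) simp
qed

lemma AE_lborel_ex_in_interval:
  fixes a b :: real
  assumes ae: "AE t in lborel. P t" and ab: "a < b"
  obtains t where "t \<in> {a<..<b}" "P t"
proof (rule ccontr)
  assume "\<not> thesis"
  have "AE t in lborel. t \<notin> {a<..<b}"
    using ae by eventually_elim (use that \<open>\<not> thesis\<close> in blast)
  then have "emeasure lborel {a<..<b} = 0" by (subst (asm) AE_iff_measurable) auto
  with ab show False by simp
qed

lemma kernel_left_deriv_jump:
  assumes K: "kernel K" and pm: "PM c K" and s: "0 < s" "s < 1"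
  shows "left_deriv K (s - 1) + c \<le> left_deriv K s"
proof (rule field_le_epsilon)
  fix e :: real assume "e > 0"
  have neg: "concave_on {-1<..<0} K" and pos: "concave_on {0<..<1} K"
    using K unfolding kernel_def by auto
  obtain u0 where u0: "u0 < s" "\<forall>u>u0. u < s \<longrightarrow> left_deriv K u \<le> left_deriv K s + e"
    using eventually_left_deriv_le[OF pos s \<open>e > 0\<close>] unfolding eventually_at_left_field by blast
  have "AE t in lborel. t \<in> {0<..<1} \<longrightarrow>
      K differentiable (at t) \<and> K differentiable (at (t - 1)) \<and> deriv K t - deriv K (t - 1) \<ge> c"
    using pm unfolding PM_def .
  from AE_lborel_ex_in_interval[OF this, of "max 0 u0" s] u0(1) s(1)
  obtain u where u: "u \<in> {max 0 u0<..<s}" and "u \<in> {0<..<1} \<longrightarrow>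
      K differentiable (at u) \<and> K differentiable (at (u - 1)) \<and> deriv K u - deriv K (u - 1) \<ge> c"
    by auto
  then have diff: "K differentiable (at u)" "K differentiable (at (u - 1))"
    and jump: "deriv K u - deriv K (u - 1) \<ge> c"
    using s by auto
  have "left_deriv K (s - 1) \<le> left_deriv K (u - 1)"
    using u s by (intro left_deriv_antimono[OF neg]) auto
  also have "\<dots> = deriv K (u - 1)" using deriv_eq_left_deriv[OF diff(2)] by simp
  also have "\<dots> \<le> deriv K u - c" using jump by simp
  also have "deriv K u = left_deriv K u" using deriv_eq_left_deriv[OF diff(1)] .
  also have "left_deriv K u \<le> left_deriv K s + e" using u0(2) u by auto
  finally show "left_deriv K (s - 1) + c \<le> left_deriv K s + e" by simp
qed

lemma transpose_kernel_trivial_if_col_diag_dominant: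
  fixes A :: "'a :: linordered_field mat"
  assumes A: "A \<in> carrier_mat n n"
    and dominant: "\<forall>r<n. (\<Sum>j\<in>{..<n} - {r}. \<bar>A $$ (j, r)\<bar>) < \<bar>A $$ (r, r)\<bar>"
    and v: "v \<in> carrier_vec n" "transpose_mat A *\<^sub>v v = 0\<^sub>v n"
  shows "v = 0\<^sub>v n"
proof (cases "n = 0")
  case True
  with v(1) show ?thesis by (intro eq_vecI) auto
next
  case False
  obtain m where m: "m < n" "\<bar>v $ m\<bar> = Max ((\<lambda>j. \<bar>v $ j\<bar>) ` {..<n})"
  proof -
    have "Max ((\<lambda>j. \<bar>v $ j\<bar>) ` {..<n}) \<in> (\<lambda>j. \<bar>v $ j\<bar>) ` {..<n}"
      using False by (intro Max_in) auto
    then show ?thesis using that by auto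
  qed
  have v_le: "\<bar>v $ j\<bar> \<le> \<bar>v $ m\<bar>" if "j < n" for j
    unfolding m(2) using that by (intro Max_ge) auto
  define S where "S = (\<Sum>j\<in>{..<n} - {m}. \<bar>A $$ (j, m)\<bar>)"
  have "(\<Sum>j<n. A $$ (j, m) * v $ j) = (transpose_mat A *\<^sub>v v) $ m"
    using m(1) v(1) A by (simp add: scalar_prod_def lessThan_atLeast0 mult.commute)
  also have "\<dots> = 0" using v(2) m(1) by simp
  finally have "A $$ (m, m) * v $ m = - (\<Sum>j\<in>{..<n} - {m}. A $$ (j, m) * v $ j)"
    using m(1) by (subst (asm) sum.remove[of _ m]) (auto simp: eq_neg_iff_add_eq_0)
  then have "\<bar>A $$ (m, m)\<bar> * \<bar>v $ m\<bar> = \<bar>\<Sum>j\<in>{..<n} - {m}. A $$ (j, m) * v $ j\<bar>"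
    by (simp add: abs_mult[symmetric])
  also have "\<dots> \<le> (\<Sum>j\<in>{..<n} - {m}. \<bar>A $$ (j, m)\<bar> * \<bar>v $ m\<bar>)"
    by (rule order_trans[OF sum_abs sum_mono]) (auto simp: abs_mult intro: mult_left_mono v_le)
  also have "\<dots> = S * \<bar>v $ m\<bar>" unfolding S_def by (simp add: sum_distrib_right)
  finally have "(\<bar>A $$ (m, m)\<bar> - S) * \<bar>v $ m\<bar> \<le> 0" by (simp add: algebra_simps)
  moreover have "S < \<bar>A $$ (m, m)\<bar>" using dominant m(1) unfolding S_def by blast
  ultimately have "\<bar>v $ m\<bar> \<le> 0" by (simp add: mult_le_0_iff)
  with v(1) v_le show ?thesis by (intro eq_vecI) (auto intro: order_antisym)
qed

lemma invertible_mat_if_det_nonzero: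
  fixes A :: "'a :: field mat"
  assumes A: "A \<in> carrier_mat n n" and "det A \<noteq> 0"
  shows "invertible_mat A"
proof -
  have "A \<in> Units (ring_mat TYPE('a) n ())" by (rule det_non_zero_imp_unit) fact+
  then obtain B where "B \<in> carrier_mat n n" "B * A = 1\<^sub>m n" "A * B = 1\<^sub>m n"
    unfolding Units_def ring_mat_def by auto
  with A show ?thesis unfolding invertible_mat_def inverts_mat_def by auto
qed

lemma invertible_mat_if_col_diag_dominant:
  fixes A :: "'a :: linordered_field mat"
  assumes A: "A \<in> carrier_mat n n"
    and dominant: "\<forall>r<n. (\<Sum>j\<in>{..<n} - {r}. \<bar>A $$ (j, r)\<bar>) < \<bar>A $$ (r, r)\<bar>"
  shows "invertible_mat A"
proof (rule invertible_mat_if_det_nonzero[OF A])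
  have "det (transpose_mat A) \<noteq> 0"
    using transpose_kernel_trivial_if_col_diag_dominant[OF A dominant] A
    by (subst det_0_iff_vec_prod_zero) auto
  then show "det A \<noteq> 0" using det_transpose[OF A] by simp
qed

lemma inS_yy_less:
  assumes nodes: "inS n y"
  shows "i < j \<Longrightarrow> j \<le> n + 1 \<Longrightarrow> yy n y i < yy n y j"
proof (induction j)
  case (Suc j)
  have "yy n y j < yy n y (Suc j)" using nodes Suc.prems unfolding inS_def by auto
  with Suc show ?case by (cases "i = j") auto
qed simp

lemma inS_yy_le: "inS n y \<Longrightarrow> i \<le> j \<Longrightarrow> j \<le> n + 1 \<Longrightarrow> yy n y i \<le> yy n y j"
  using inS_yy_less[of n y i j] by (cases "i = j") auto

lemma inS_node_in_unit:
  assumes "inS n y" "i \<in> {1..n}"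
  shows "0 < y i" "y i < 1"
  using inS_yy_less[OF assms(1), of 0 i] inS_yy_less[OF assms(1), of i "n + 1"] assms(2)
  by (auto simp: yy_def)

lemma rintI_lower: "t \<in> rintI n y j \<Longrightarrow> if j = 0 then 0 \<le> t else yy n y j < t"
  and rintI_upper: "t \<in> rintI n y j \<Longrightarrow> if j = n then t \<le> 1 else t < yy n y (j + 1)"
  unfolding rintI_def by auto

context
  fixes n j :: nat and y :: "nat \<Rightarrow> real" and t :: real
  assumes nodes: "inS n y" and j: "j \<le> n" and t: "t \<in> rintI n y j"
begin

lemma rintI_in_unit: "0 \<le> t" "t \<le> 1"
proof -
  have "yy n y 0 \<le> yy n y j" "yy n y (j + 1) \<le> yy n y (n + 1)"
    using inS_yy_le[OF nodes] j by auto
  then show "0 \<le> t" "t \<le> 1"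
    using rintI_lower[OF t] rintI_upper[OF t] by (auto simp: yy_def split: if_splits)
qed

lemma rintI_above_node: "i \<in> {1..j} \<Longrightarrow> y i < t"
  using inS_yy_le[OF nodes, of i j] rintI_lower[OF t] j by (auto simp: yy_def split: if_splits)

lemma rintI_below_node: "j < i \<Longrightarrow> i \<le> n \<Longrightarrow> t < y i"
  using inS_yy_le[OF nodes, of "j + 1" i] rintI_upper[OF t] j by (auto simp: yy_def split: if_splits)

end

context
  fixes n r :: nat and y tl tu mu :: "nat \<Rightarrow> real" and K :: "real \<Rightarrow> real"
  assumes nodes: "inS n y" and r: "r \<in> {1..n}" and K: "kernel K"
    and points: "\<forall>j\<in>{0..n}. tl j \<in> rintI n y j \<and> tu j \<in> rintI n y j"
    and bounds: "\<forall>j\<in>{0..n}. left_deriv K (tu j - y r) \<le> mu j \<and> mu j \<le> left_deriv K (tl j - y r)"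
begin

lemma column_increment_nonpos:
  assumes j: "j \<in> {1..n}" "j \<noteq> r"
  shows "mu j \<le> mu (j - 1)"
proof -
  have neg: "concave_on {-1<..<0} K" and pos: "concave_on {0<..<1} K"
    using K unfolding kernel_def by auto
  have tu: "tu (j - 1) \<in> rintI n y (j - 1)" and tl: "tl j \<in> rintI n y j"
    using points j by auto
  have yr: "0 < y r" "y r < 1" using inS_node_in_unit[OF nodes r] by auto
  have "tu (j - 1) < y j" "y j < tl j"
    using rintI_below_node[OF nodes _ tu, of j] rintI_above_node[OF nodes _ tl, of j] j by auto
  then have "left_deriv K (tl j - y r) \<le> left_deriv K (tu (j - 1) - y r)"
  proof (cases "j < r")
    case True
    have "0 \<le> tu (j - 1)" "tl j < y r"
      using rintI_in_unit[OF nodes _ tu] rintI_below_node[OF nodes _ tl, of r] True r j by auto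
    with \<open>tu (j - 1) < y j\<close> \<open>y j < tl j\<close> yr show ?thesis
      by (intro left_deriv_antimono[OF neg]) auto
  next
    case False
    have "y r < tu (j - 1)" "tl j \<le> 1"
      using rintI_above_node[OF nodes _ tu, of r] rintI_in_unit[OF nodes _ tl] False r j by auto
    with \<open>tu (j - 1) < y j\<close> \<open>y j < tl j\<close> yr show ?thesis
      by (intro left_deriv_antimono[OF pos]) auto
  qed
  moreover have "mu j \<le> left_deriv K (tl j - y r)" "left_deriv K (tu (j - 1) - y r) \<le> mu (j - 1)"
    using bounds j by auto
  ultimately show ?thesis by linarith
qed

lemma column_total_increment_ge:
  assumes "PM c K"
  shows "c \<le> mu n - mu 0"
proof -
  have neg: "concave_on {-1<..<0} K" using K unfolding kernel_def by auto
  have tu: "tu n \<in> rintI n y n" and tl: "tl 0 \<in> rintI n y 0" using points by auto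
  have yr: "0 < y r" "y r < 1" using inS_node_in_unit[OF nodes r] by auto
  have "y r < tu n" "tu n \<le> 1" "0 \<le> tl 0" "tl 0 < y r"
    using rintI_above_node[OF nodes _ tu, of r] rintI_in_unit[OF nodes _ tu]
      rintI_in_unit[OF nodes _ tl] rintI_below_node[OF nodes _ tl, of r] r by auto
  then have "left_deriv K (tl 0 - y r) \<le> left_deriv K (tu n - y r - 1)"
    using yr by (intro left_deriv_antimono[OF neg]) auto
  moreover have "left_deriv K (tu n - y r - 1) + c \<le> left_deriv K (tu n - y r)"
    using kernel_left_deriv_jump[OF K assms] \<open>y r < tu n\<close> \<open>tu n \<le> 1\<close> yr by auto
  moreover have "mu 0 \<le> left_deriv K (tl 0 - y r)" "left_deriv K (tu n - y r) \<le> mu n"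
    using bounds[rule_format, of 0] bounds[rule_format, of n] by auto
  ultimately show ?thesis by linarith
qed

end

lemma diag_increment_minus_abs_increments:
  fixes f :: "nat \<Rightarrow> real"
  assumes r: "r \<in> {1..n}" and nonpos: "\<forall>j\<in>{1..n} - {r}. f j \<le> f (j - 1)"
  shows "(f r - f (r - 1)) - (\<Sum>j\<in>{1..n} - {r}. \<bar>f j - f (j - 1)\<bar>) = f n - f 0"
proof -
  have telescope: "(\<Sum>j\<in>{1..m}. f j - f (j - 1)) = f m - f 0" for m
    by (induction m) (auto simp: sum.cl_ivl_Suc)
  have "(\<Sum>j\<in>{1..n} - {r}. \<bar>f j - f (j - 1)\<bar>) = - (\<Sum>j\<in>{1..n} - {r}. f j - f (j - 1))"
    using nonpos by (simp add: sum_negf[symmetric])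
  also have "\<dots> = (f r - f (r - 1)) - (\<Sum>j\<in>{1..n}. f j - f (j - 1))"
    using r by (simp add: sum_diff1)
  finally show ?thesis using telescope[of n] by simp
qed

lemma sum_remove_Suc_shift:
  "(\<Sum>j\<in>{..<n} - {r}. g (Suc j)) = (\<Sum>j\<in>{1..n} - {Suc r}. g j)"
proof -
  have "{1..n} - {Suc r} = Suc ` ({..<n} - {r})"
    by (simp add: image_set_diff image_Suc_lessThan)
  then show ?thesis by (simp add: sum.reindex)
qed

theorem lemma6p4:
  fixes n :: nat and J :: "real \<Rightarrow> ereal" and K :: "nat \<Rightarrow> real \<Rightarrow> real" and c :: real
    and y :: "nat \<Rightarrow> real" and tl tu :: "nat \<Rightarrow> real" and mu :: "nat \<Rightarrow> nat \<Rightarrow> real"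
  assumes "n_field n J"
    and "\<forall>i\<in>{1..n}. kernel (K i)"
    and "c > 0"
    and "\<forall>i\<in>{1..n}. PM c (K i)"
    and "inY n J K y"
    and "\<forall>j\<in>{0..n}. tl j \<in> rintI n y j \<and> tu j \<in> rintI n y j \<and> tl j \<le> tu j"
    and "\<forall>j\<in>{0..n}. \<forall>r\<in>{1..n}.
           left_deriv (K r) (tu j - y r) \<le> mu j r \<and> mu j r \<le> left_deriv (K r) (tl j - y r)"
  shows "(\<forall>r\<in>{1..n}. (mu r r - mu (r - 1) r)
            - (\<Sum>j\<in>{1..n} - {r}. \<bar>mu j r - mu (j - 1) r\<bar>) \<ge> c)
         \<and> invertible_mat (mat n n (\<lambda>(j, r). mu (j + 1) (r + 1) - mu j (r + 1)))"
proof -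
  note kernels = assms(2) and PMs = assms(4) and bounds = assms(7)
  have nodes: "inS n y" using assms(5) unfolding inY_def by simp
  have points: "\<forall>j\<in>{0..n}. tl j \<in> rintI n y j \<and> tu j \<in> rintI n y j" using assms(6) by simp
  have column: "c \<le> (mu r r - mu (r - 1) r) - (\<Sum>j\<in>{1..n} - {r}. \<bar>mu j r - mu (j - 1) r\<bar>)"
    if r: "r \<in> {1..n}" for r
  proof -
    have K: "kernel (K r)" and pm: "PM c (K r)" using kernels PMs r by auto
    have col_bounds: "\<forall>j\<in>{0..n}. left_deriv (K r) (tu j - y r) \<le> mu j r
        \<and> mu j r \<le> left_deriv (K r) (tl j - y r)"
      using bounds r by auto
    have "\<forall>j\<in>{1..n} - {r}. mu j r \<le> mu (j - 1) r"
      using column_increment_nonpos[OF nodes r K points col_bounds] by auto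
    moreover have "c \<le> mu n r - mu 0 r"
      using column_total_increment_ge[OF nodes r K points col_bounds pm] .
    ultimately show ?thesis using diag_increment_minus_abs_increments[OF r, of "\<lambda>j. mu j r"]
      by linarith
  qed
  let ?A = "mat n n (\<lambda>(j, r). mu (j + 1) (r + 1) - mu j (r + 1))"
  have "invertible_mat ?A"
  proof (rule invertible_mat_if_col_diag_dominant[rotated], intro allI impI)
    fix r assume "r < n"
    with column[of "Suc r"] \<open>c > 0\<close>
    show "(\<Sum>j\<in>{..<n} - {r}. \<bar>?A $$ (j, r)\<bar>) < \<bar>?A $$ (r, r)\<bar>"
      using sum_remove_Suc_shift[of "\<lambda>j. \<bar>mu j (Suc r) - mu (j - 1) (Suc r)\<bar>" n r]
      by simp
  qed simp
  with column show ?thesis by blast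
qed

end
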